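(* Fix $p\in(0,1)$, put $q=1-p$, let $T_n$ be the completion time of the one-set clumsy coupon collector on $n$ types started from the empty collection, and let $Y_n:=pq^nT_n$. There are constants $C,c\in(0,\infty)$, depending only on $p$, such that $\mathbb P(Y_n>x)\le Ce^{-cx}$ for all $x\ge0$ and all sufficiently large $n$. Consequently, for every fixed $r\ge1$, $\mathbb EY_n^r\to\mathbb EZ^r=r!$ where $Z\sim\mathrm{Exp}(1)$. In particular $\mathbb ET_n\sim 1/(pq^n)$ and $\mathrm{Var}(T_n)\sim 1/(p^2q^{2n})$.
   Context: One-set clumsy coupon collector: the state is $X(t)\in\{0,1\}^n$ with $X(0)=(0,\dots,0)$. At each step one type $i$ is chosen uniformly from $[n]$, independently of the past, and $X_i$ is set to $1$ with probability $q$ and to $0$ with probability $p$; other coordinates are unchanged. $T_n=\inf\{t\ge0:X(t)=(1,\dots,1)\}$. *)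

theory Defs
  imports "HOL-Probability.Probability" "HOL-Library.Landau_Symbols"
begin

text \<open>States of the one-set clumsy coupon collector on n types: functions
  nat \<Rightarrow> bool, where coordinate i (for i < n) records X_i = 1; coordinates
  i \<ge> n are irrelevant (always False).  q = 1 - p.\<close>

definition full_state :: "nat \<Rightarrow> (nat \<Rightarrow> bool) \<Rightarrow> bool" where
  "full_state n x \<longleftrightarrow> (\<forall>i<n. x i)"

definition cc_step :: "nat \<Rightarrow> real \<Rightarrow> (nat \<Rightarrow> bool) \<Rightarrow> (nat \<Rightarrow> bool) pmf" where
  "cc_step n p x =
     pmf_of_set {..<n} \<bind> (\<lambda>i. bernoulli_pmf (1 - p) \<bind> (\<lambda>b. return_pmf (x(i := b))))"

text \<open>The chain stopped at the completion time T_n: once all types are collected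
  it stays put.  Its law at time t is obtained by iterating the stopped kernel from
  X(0) = (0,...,0).\<close>
definition cc_stopped_step :: "nat \<Rightarrow> real \<Rightarrow> (nat \<Rightarrow> bool) \<Rightarrow> (nat \<Rightarrow> bool) pmf" where
  "cc_stopped_step n p x = (if full_state n x then return_pmf x else cc_step n p x)"

definition cc_stopped_law :: "nat \<Rightarrow> real \<Rightarrow> nat \<Rightarrow> (nat \<Rightarrow> bool) pmf" where
  "cc_stopped_law n p t =
     ((\<lambda>M. M \<bind> cc_stopped_step n p) ^^ t) (return_pmf (\<lambda>_. False))"

text \<open>P(T_n \<le> t) = P(stopped chain is full at time t).\<close>
definition cc_cdf :: "nat \<Rightarrow> real \<Rightarrow> nat \<Rightarrow> real" where
  "cc_cdf n p t = measure_pmf.prob (cc_stopped_law n p t) {x. full_state n x}"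

definition cc_prob :: "nat \<Rightarrow> real \<Rightarrow> nat \<Rightarrow> real" where
  "cc_prob n p t = (if t = 0 then cc_cdf n p 0 else cc_cdf n p t - cc_cdf n p (t - 1))"

definition T_law :: "nat \<Rightarrow> real \<Rightarrow> nat measure" where
  "T_law n p = density (count_space UNIV) (\<lambda>t. ennreal (cc_prob n p t))"

definition Y_scale :: "nat \<Rightarrow> real \<Rightarrow> nat \<Rightarrow> real" where
  "Y_scale n p t = p * (1 - p) ^ n * real t"

end

(*
  Only the number k of collected types matters: it is a birth-death chain on {0..n} that
  moves up with probability q(n-k)/n and down with probability pk/n, and T is its hitting
  time of n.  Without absorption the chain is reversible with respect to the Binomial(n,q)
  weights pi, so E_k T is the sum over j = k..n-1 of the crossing times
  h_j = P(Bin(n,q) <= j) / (pi_j q(n-j)/n) from j to j + 1.  The h_j increase in j, the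
  last one is h_(n-1) = (1 - q^n) / (p q^n), and all the others together are
  O(1 / (n p q^n)); hence p q^n E_k T -> 1 uniformly in k < n.

  The binomial moments E_k C(T, r+1) solve Poisson equations for the killed kernel Q with
  right-hand side Q E_. C(T, r).  A minimum principle for Q sandwiches them between
  (h_(n-1) - 1)^r E_k T and (E_0 T - 1)^r E_k T, so (p q^n)^j E C(T, j) -> 1, and
  expanding t^r in binomial coefficients by Stirling numbers gives E Y_n^r -> r!.
  The exponential tail follows from Markov's inequality P_k(T > 2 E_0 T) <= 1/2,
  iterated by the Markov property.
*)

theory Submission
  imports Defs "HOL-Combinatorics.Stirling" "HOL-Real_Asymp.Real_Asymp"
begin

lemma measure_pmf_prob_bind:
  "measure_pmf.prob (bind_pmf M f) X = measure_pmf.expectation M (\<lambda>x. measure_pmf.prob (f x) X)"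
  unfolding measure_pmf_bind
  by (subst measure_pmf.measure_bind[where N="count_space UNIV"]) (auto simp: measure_subprob)

lemma integral_density_nat_sums:
  fixes d g :: "nat \<Rightarrow> real"
  assumes d: "\<And>t. 0 \<le> d t" and g: "\<And>t. 0 \<le> g t" and S: "(\<lambda>t. d t * g t) sums S"
  shows "integral\<^sup>L (density (count_space UNIV) (\<lambda>t. ennreal (d t))) g = S"
proof -
  have "integral\<^sup>L (density (count_space UNIV) (\<lambda>t. ennreal (d t))) g
      = integral\<^sup>L (count_space UNIV) (\<lambda>t. d t * g t)"
    by (subst integral_density) (auto simp: d)
  also have "\<dots> = (\<Sum>t. d t * g t)"
  proof (rule integral_count_space_nat)
    have "norm (d t * g t) = d t * g t" for t using d[of t] g[of t] by simp
    then show "integrable (count_space UNIV) (\<lambda>t. d t * g t)"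
      using sums_summable[OF S] by (simp add: integrable_count_space_nat_iff)
  qed
  finally show ?thesis using S by (simp add: sums_iff)
qed

lemma measure_density_nat_sums:
  fixes d :: "nat \<Rightarrow> real"
  assumes d: "\<And>t. 0 \<le> d t" and "summable d"
  shows "(\<lambda>t. d t * indicator A t) sums measure (density (count_space UNIV) (\<lambda>t. ennreal (d t))) A"
proof -
  have sm: "summable (\<lambda>t. d t * indicator A t)"
    by (rule summable_comparison_test[OF _ \<open>summable d\<close>]) (auto simp: d indicator_def)
  have "emeasure (density (count_space UNIV) (\<lambda>t. ennreal (d t))) A
      = (\<integral>\<^sup>+ t. ennreal (d t) * indicator A t \<partial>count_space UNIV)"
    by (subst emeasure_density) (auto simp: nn_integral_set_ennreal)
  also have "\<dots> = (\<Sum>t. ennreal (d t) * indicator A t)"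
    by (simp only: nn_integral_count_space_nat)
  also have "\<dots> = (\<Sum>t. ennreal (d t * indicator A t))"
    by (auto intro!: suminf_cong simp: indicator_def)
  also have "\<dots> = ennreal (\<Sum>t. d t * indicator A t)"
    by (rule suminf_ennreal2[OF _ sm]) (simp add: d)
  finally show ?thesis
    using sm by (simp add: measure_def d suminf_nonneg summable_sums)
qed

lemma real_mult_choose:
  "real t * real (t choose j) = real (Suc j) * real (t choose Suc j) + real j * real (t choose j)"
proof (cases "j \<le> t")
  case True
  have "real t * real (t choose j) = real (t - j) * real (t choose j) + real j * real (t choose j)"
    using True by (simp add: of_nat_diff algebra_simps)
  also have "real (t - j) * real (t choose j) = real (Suc j) * real (t choose Suc j)"
    using binomial_absorb_comp[of t j] binomial_absorption[of j t] by (metis of_nat_mult)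
  finally show ?thesis .
qed (simp add: binomial_eq_0)

lemma real_power_eq_sum_Stirling_choose:
  "real t ^ r = (\<Sum>j\<le>r. real (Stirling r j) * fact j * real (t choose j))"
proof (induction r)
  case (Suc r)
  let ?S = "\<lambda>j. real (Stirling r j)" and ?c = "\<lambda>j. real (t choose j)"
  have "real t ^ Suc r = (\<Sum>j\<le>r. ?S j * fact j * (real t * ?c j))"
    by (simp add: Suc sum_distrib_left algebra_simps)
  also have "\<dots> = (\<Sum>j\<le>r. ?S j * fact (Suc j) * ?c (Suc j))
                   + (\<Sum>j\<le>r. real j * ?S j * fact j * ?c j)"
    by (simp add: real_mult_choose sum.distrib algebra_simps)
  also have "(\<Sum>j\<le>r. real j * ?S j * fact j * ?c j) = (\<Sum>j\<le>Suc r. real j * ?S j * fact j * ?c j)"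
    by simp
  also have "\<dots> = (\<Sum>j\<le>r. real (Suc j) * ?S (Suc j) * fact (Suc j) * ?c (Suc j))"
    by (subst sum.atMost_Suc_shift) simp
  also have "(\<Sum>j\<le>r. ?S j * fact (Suc j) * ?c (Suc j)) + \<dots>
      = (\<Sum>j\<le>r. real (Stirling (Suc r) (Suc j)) * fact (Suc j) * ?c (Suc j))"
    by (simp add: sum.distrib algebra_simps del: fact_Suc)
  also have "\<dots> = (\<Sum>j\<le>Suc r. real (Stirling (Suc r) j) * fact j * ?c j)"
    by (subst sum.atMost_Suc_shift) simp
  finally show ?case .
qed simp

lemma half_power_le_exp: "(1/2 :: real) ^ m \<le> exp (- real m / 2)"
proof -
  have "exp (1/2 :: real) \<le> 2"
  proof (rule ccontr)
    assume "\<not> ?thesis"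
    then have "2 * 2 < exp (1/2 :: real) * exp (1/2)" by (intro mult_strict_mono) auto
    also have "\<dots> = exp 1" by (simp flip: exp_add)
    finally show False using exp_le by simp
  qed
  then have "exp (real m / 2) \<le> 2 ^ m"
    using power_mono[of "exp (1/2)" "2::real" m] by (simp flip: exp_of_nat_mult)
  then show ?thesis by (simp add: exp_minus power_one_over field_simps)
qed

section \<open>The number of collected types\<close>

definition collected :: "nat \<Rightarrow> (nat \<Rightarrow> bool) \<Rightarrow> nat" where
  "collected n x = card {i. i < n \<and> x i}"

lemma collected_le: "collected n x \<le> n"
  unfolding collected_def by (rule card_mono[of "{..<n}", simplified]) auto

lemma full_state_iff_collected: "full_state n x \<longleftrightarrow> collected n x = n"
proof
  assume "full_state n x"
  then have "{i. i < n \<and> x i} = {..<n}" by (auto simp: full_state_def)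
  then show "collected n x = n" by (simp add: collected_def)
next
  assume "collected n x = n"
  then have "{i. i < n \<and> x i} = {..<n}"
    unfolding collected_def by (intro card_subset_eq) auto
  then show "full_state n x" by (auto simp: full_state_def)
qed

lemma collected_fun_upd:
  assumes "i < n"
  shows "collected n (x(i := b)) =
    (if b then (if x i then collected n x else Suc (collected n x))
     else (if x i then collected n x - 1 else collected n x))"
proof (cases b)
  case True
  then have "{j. j < n \<and> (x(i := b)) j} = insert i {j. j < n \<and> x j}" using assms by auto
  then show ?thesis using True assms by (simp add: collected_def card_insert_if)
next
  case False
  then have "{j. j < n \<and> (x(i := b)) j} = {j. j < n \<and> x j} - {i}" using assms by auto
  then show ?thesis using False assms by (simp add: collected_def card_Diff_singleton_if)
qed

lemma sum_if_collected:
  fixes A B :: real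
  shows "(\<Sum>i<n. if x i then A else B) = real (collected n x) * A + real (n - collected n x) * B"
proof -
  have "{..<n} \<inter> {i. x i} = {i. i < n \<and> x i}" "{..<n} \<inter> - {i. x i} = {..<n} - {i. i < n \<and> x i}"
    by auto
  moreover have "card ({..<n} - {i. i < n \<and> x i}) = n - collected n x"
    unfolding collected_def by (subst card_Diff_subset) auto
  ultimately show ?thesis by (simp add: sum.If_cases collected_def)
qed

locale clumsy_collector =
  fixes n :: nat and p :: real
  assumes n_pos: "1 \<le> n" and p_pos: "0 < p" and p_less_1: "p < 1"
begin

definition up_rate :: "nat \<Rightarrow> real" where
  "up_rate k = (1 - p) * (real n - real k) / real n"

definition down_rate :: "nat \<Rightarrow> real" where
  "down_rate k = p * real k / real n"

text \<open>The number of collected types is a birth-death chain; \<open>Q\<close> is its transition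
  operator on functions of that number, killed on completion (\<open>k = n\<close>).\<close>

definition Q :: "(nat \<Rightarrow> real) \<Rightarrow> nat \<Rightarrow> real" where
  "Q f k = (if k < n then up_rate k * f (Suc k) + down_rate k * f (k - 1)
              + (1 - up_rate k - down_rate k) * f k else 0)"

definition alive :: "nat \<Rightarrow> real" where
  "alive k = (if k < n then 1 else 0)"

text \<open>\<open>surv t k\<close> is the probability that the collection is still incomplete after
  \<open>t\<close> steps when started with \<open>k\<close> types collected.\<close>

definition surv :: "nat \<Rightarrow> nat \<Rightarrow> real" where
  "surv t = (Q ^^ t) alive"

lemma n_gt_0: "0 < real n"
  using n_pos by simp

lemma Q_eq_average:
  "k < n \<Longrightarrow> Q f k = (real k * ((1 - p) * f k + p * f (k - 1))
                       + real (n - k) * ((1 - p) * f (Suc k) + p * f k)) / real n"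
  using n_gt_0 by (simp add: Q_def up_rate_def down_rate_def of_nat_diff field_simps)

lemma surv_0: "surv 0 = alive"
  by (simp add: surv_def)

lemma surv_Suc: "surv (Suc t) = Q (surv t)"
  by (simp add: surv_def)

lemma surv_add: "surv (t + s) = (Q ^^ t) (surv s)"
  by (simp add: surv_def funpow_add)

lemma surv_ge_n: "n \<le> k \<Longrightarrow> surv t k = 0"
  by (cases t) (auto simp: surv_0 surv_Suc alive_def Q_def)

definition evolve :: "(nat \<Rightarrow> bool) pmf \<Rightarrow> (nat \<Rightarrow> bool) pmf" where
  "evolve M = M \<bind> cc_stopped_step n p"

lemma evolve_funpow_bind: "(evolve ^^ t) M = M \<bind> (\<lambda>y. (evolve ^^ t) (return_pmf y))"
proof (induction t arbitrary: M)
  case 0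
  then show ?case by (simp add: bind_return_pmf')
next
  case (Suc t)
  have "(evolve ^^ Suc t) M = evolve ((evolve ^^ t) M)"
    by simp
  also have "\<dots> = (M \<bind> (\<lambda>y. (evolve ^^ t) (return_pmf y))) \<bind> cc_stopped_step n p"
    by (subst Suc.IH[of M, symmetric]) (simp add: evolve_def)
  also have "\<dots> = M \<bind> (\<lambda>y. (evolve ^^ Suc t) (return_pmf y))"
    by (simp add: bind_assoc_pmf evolve_def)
  finally show ?case .
qed

lemma prob_cc_stopped_step_bind:
  assumes "\<not> full_state n x"
  shows "measure_pmf.prob (cc_stopped_step n p x \<bind> G) A
    = (\<Sum>i<n. (1 - p) * measure_pmf.prob (G (x(i := True))) A
              + p * measure_pmf.prob (G (x(i := False))) A) / real n"
proof -
  have "{..<n} \<noteq> {}"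
    using n_pos by (auto simp: lessThan_empty_iff)
  then show ?thesis
    using assms p_pos p_less_1
    by (simp add: cc_stopped_step_def cc_step_def bind_assoc_pmf bind_return_pmf
                  measure_pmf_prob_bind integral_pmf_of_set)
       (auto intro!: sum.cong simp: fun_upd_def mult.commute)
qed

lemma prob_not_full_evolve:
  "measure_pmf.prob ((evolve ^^ t) (return_pmf x)) {y. \<not> full_state n y} = surv t (collected n x)"
proof (induction t arbitrary: x)
  case 0
  show ?case using collected_le[of n x] full_state_iff_collected[of n x]
    by (auto simp: surv_0 alive_def indicator_def)
next
  case (Suc t)
  let ?k = "collected n x"
  have evolve_Suc:
    "(evolve ^^ Suc t) (return_pmf x) = cc_stopped_step n p x \<bind> (\<lambda>y. (evolve ^^ t) (return_pmf y))"
    by (simp only: funpow_Suc_right o_apply)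
       (simp add: evolve_def bind_return_pmf evolve_funpow_bind[of t "cc_stopped_step n p x"])
  show ?case
  proof (cases "full_state n x")
    case True
    then show ?thesis using Suc full_state_iff_collected[of n x]
      unfolding evolve_Suc by (simp add: cc_stopped_step_def bind_return_pmf surv_Suc Q_def surv_ge_n)
  next
    case False
    then have k_less: "?k < n"
      using full_state_iff_collected collected_le[of n x] by (metis le_neq_implies_less)
    have "measure_pmf.prob ((evolve ^^ Suc t) (return_pmf x)) {y. \<not> full_state n y}
       = (\<Sum>i<n. (1 - p) * surv t (collected n (x(i := True)))
                 + p * surv t (collected n (x(i := False)))) / real n"
      unfolding evolve_Suc prob_cc_stopped_step_bind[OF False] Suc ..
    also have "\<dots> = (\<Sum>i<n. if x i then (1 - p) * surv t ?k + p * surv t (?k - 1)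
                          else (1 - p) * surv t (Suc ?k) + p * surv t ?k) / real n"
      by (intro arg_cong[where f="\<lambda>s. s / real n"] sum.cong) (auto simp: collected_fun_upd)
    also have "\<dots> = surv (Suc t) ?k"
      by (simp only: sum_if_collected) (simp add: surv_Suc Q_eq_average k_less)
    finally show ?thesis .
  qed
qed

lemma cc_cdf_eq: "cc_cdf n p t = 1 - surv t 0"
proof -
  have "cc_stopped_law n p t = (evolve ^^ t) (return_pmf (\<lambda>_. False))"
    by (simp add: cc_stopped_law_def evolve_def[abs_def])
  moreover have "{x. full_state n x} = UNIV - {y. \<not> full_state n y}"
    by auto
  moreover have "collected n (\<lambda>_. False) = 0"
    by (simp add: collected_def)
  ultimately show ?thesis
    unfolding cc_cdf_def using prob_not_full_evolve[of t "\<lambda>_. False"]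
      measure_pmf.prob_compl[of "{y. \<not> full_state n y}" "(evolve ^^ t) (return_pmf (\<lambda>_. False))"]
    by simp
qed

lemma Q_const: "k < n \<Longrightarrow> Q (\<lambda>_. c) k = c"
  by (simp add: Q_def algebra_simps)

lemma Q_mono:
  assumes "\<And>k. f k \<le> g k"
  shows "Q f k \<le> Q g k"
proof (cases "k < n")
  case True
  show ?thesis unfolding Q_eq_average[OF True] using assms p_pos p_less_1 n_gt_0
    by (intro divide_right_mono add_mono mult_left_mono) auto
qed (simp add: Q_def)

lemma Q_nonneg: "(\<And>k. 0 \<le> f k) \<Longrightarrow> 0 \<le> Q f k"
  using Q_mono[of "\<lambda>_. 0" f k] by (cases "k < n") (auto simp: Q_const Q_def)

lemma Q_linear: "Q (\<lambda>k. c * f k + d * g k) k = c * Q f k + d * Q g k"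
  by (simp add: Q_def algebra_simps)

lemma Q_scale: "Q (\<lambda>k. c * f k) k = c * Q f k"
  using Q_linear[of c f 0 f k] by simp

lemma Q_diff: "Q (\<lambda>k. f k - g k) k = Q f k - Q g k"
  using Q_linear[of 1 f "-1" g k] by simp

lemma Q_sum: "Q (\<lambda>k. \<Sum>t\<in>A. g t k) k = (\<Sum>t\<in>A. Q (g t) k)"
proof (induction A rule: infinite_finite_induct)
  case (insert x F)
  then show ?case using Q_linear[of 1 "g x" 1 "\<lambda>k. \<Sum>t\<in>F. g t k" k] by simp
qed (simp_all add: Q_def)

lemma Q_suminf:
  assumes "\<And>k. summable (\<lambda>t. g t k)"
  shows "Q (\<lambda>k. \<Sum>t. g t k) k = (\<Sum>t. Q (g t) k)"
proof (cases "k < n")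
  case True
  have "(\<lambda>t. Q (g t) k) sums Q (\<lambda>k. \<Sum>t. g t k) k"
    unfolding Q_def using True assms by (simp only: if_True) (intro sums_add sums_mult summable_sums)
  then show ?thesis by (simp add: sums_iff)
qed (simp add: Q_def)

lemma Q_pow_mono: "(\<And>k. f k \<le> g k) \<Longrightarrow> (Q ^^ N) f k \<le> (Q ^^ N) g k"
  by (induction N arbitrary: k) (auto intro: Q_mono)

lemma Q_pow_scale: "(Q ^^ N) (\<lambda>k. c * f k) = (\<lambda>k. c * (Q ^^ N) f k)"
  by (induction N) (auto simp: Q_scale[symmetric])

lemma Q_alive_le: "Q alive k \<le> alive k"
proof (cases "k < n")
  case True
  have "Q alive k \<le> Q (\<lambda>_. 1) k" by (rule Q_mono) (simp add: alive_def)
  then show ?thesis using True by (simp add: Q_const alive_def)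
qed (simp add: Q_def alive_def)

lemma surv_nonneg: "0 \<le> surv t k"
  by (induction t arbitrary: k) (auto simp: surv_0 surv_Suc alive_def intro: Q_nonneg)

lemma surv_Suc_le: "surv (Suc t) k \<le> surv t k"
proof -
  have "surv (Suc t) = (Q ^^ t) (Q alive)"
    by (simp only: surv_def funpow_Suc_right comp_apply)
  then show ?thesis using Q_pow_mono[of "Q alive" alive t k, OF Q_alive_le] by (simp add: surv_def)
qed

lemma surv_antimono: "t \<le> t' \<Longrightarrow> surv t' k \<le> surv t k"
  by (induction t' rule: dec_induct) (auto intro: order_trans[OF surv_Suc_le])

lemma surv_le_alive: "surv t k \<le> alive k"
  using surv_antimono[of 0 t k] by (simp add: surv_0)

section \<open>Expected completion time\<close>

definition binom_weight :: "nat \<Rightarrow> real" where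
  "binom_weight j = real (n choose j) * (1 - p) ^ j * p ^ (n - j)"

definition binom_cdf :: "nat \<Rightarrow> real" where
  "binom_cdf j = (\<Sum>i\<le>j. binom_weight i)"

text \<open>The expected time to go from \<open>j\<close> to \<open>j + 1\<close> collected types; the formula comes
  from detailed balance of the unkilled chain with respect to \<open>binom_weight\<close>.\<close>

definition crossing_time :: "nat \<Rightarrow> real" where
  "crossing_time j = binom_cdf j / (binom_weight j * up_rate j)"

definition expected_time :: "nat \<Rightarrow> real" where
  "expected_time k = (\<Sum>j\<in>{k..<n}. crossing_time j)"

lemma binom_weight_pos: "j \<le> n \<Longrightarrow> 0 < binom_weight j"
  using p_pos p_less_1 by (simp add: binom_weight_def)

lemma up_rate_pos: "j < n \<Longrightarrow> 0 < up_rate j"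
  using p_pos p_less_1 n_gt_0 by (simp add: up_rate_def)

lemma down_rate_nonneg: "0 \<le> down_rate j"
  using p_pos n_gt_0 by (simp add: down_rate_def)

lemma down_rate_pos: "0 < j \<Longrightarrow> 0 < down_rate j"
  using p_pos n_gt_0 by (simp add: down_rate_def)

lemma up_rate_minus_down_rate_Suc_le: "up_rate (Suc j) - down_rate (Suc j) \<le> up_rate j - down_rate j"
  using p_pos p_less_1 n_gt_0 by (simp add: up_rate_def down_rate_def field_simps)

lemma binom_weight_mult_up_rate:
  assumes "j < n"
  shows "binom_weight j * up_rate j = real (n - 1 choose j) * (1 - p) ^ Suc j * p ^ (n - j)"
proof -
  have absorb: "real (n - j) * real (n choose j) = real n * real (n - 1 choose j)"
    using binomial_absorb_comp[of n j] by (metis of_nat_mult)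
  have "binom_weight j * up_rate j = real (n - j) * real (n choose j) * (1 - p) ^ Suc j * p ^ (n - j) / real n"
    using assms by (simp add: binom_weight_def up_rate_def of_nat_diff field_simps)
  then show ?thesis
    unfolding absorb using n_gt_0 by simp
qed

lemma detailed_balance:
  assumes "j < n"
  shows "binom_weight j * up_rate j = binom_weight (Suc j) * down_rate (Suc j)"
proof -
  have absorb: "real (Suc j) * real (n choose Suc j) = real n * real (n - 1 choose j)"
    using binomial_absorption[of j n] by (metis of_nat_mult)
  have "p ^ (n - j) = p * p ^ (n - Suc j)"
    using assms by (simp flip: power_Suc add: Suc_diff_Suc)
  then have "binom_weight (Suc j) * down_rate (Suc j)
      = real (Suc j) * real (n choose Suc j) * (1 - p) ^ Suc j * p ^ (n - j) / real n"
    by (simp add: binom_weight_def down_rate_def field_simps)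
  then show ?thesis
    unfolding absorb using assms n_gt_0 by (simp add: binom_weight_mult_up_rate)
qed

lemma crossing_time_rec:
  assumes "k < n"
  shows "up_rate k * crossing_time k = 1 + down_rate k * crossing_time (k - 1)"
proof (cases k)
  case 0
  then show ?thesis
    using assms binom_weight_pos[of 0] up_rate_pos[of 0] by (simp add: crossing_time_def binom_cdf_def down_rate_def)
next
  case (Suc j)
  have pos: "0 < binom_weight k" "0 < up_rate k" "0 < down_rate k"
    using assms Suc binom_weight_pos up_rate_pos down_rate_pos by auto
  have "binom_weight j * up_rate j = binom_weight k * down_rate k"
    using detailed_balance[of j] Suc assms by simp
  then show ?thesis
    using pos Suc by (simp add: crossing_time_def binom_cdf_def field_simps)
qed

lemma crossing_time_nonneg: "j < n \<Longrightarrow> 0 \<le> crossing_time j"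
  unfolding crossing_time_def binom_cdf_def
  by (intro divide_nonneg_pos sum_nonneg mult_pos_pos)
     (auto intro: less_imp_le[OF binom_weight_pos] binom_weight_pos up_rate_pos)

lemma sum_binom_weight: "(\<Sum>i\<le>n. binom_weight i) = 1"
  using binomial_ring[of "1 - p" p n] by (simp add: binom_weight_def mult.assoc)

lemma binom_cdf_le_1: "j \<le> n \<Longrightarrow> binom_cdf j \<le> 1"
  unfolding binom_cdf_def sum_binom_weight[symmetric]
  using binom_weight_pos by (intro sum_mono2) (auto intro: less_imp_le)

lemma crossing_time_le: "j < n \<Longrightarrow> crossing_time j \<le> 1 / (binom_weight j * up_rate j)"
  using binom_cdf_le_1[of j] binom_weight_pos[of j] up_rate_pos[of j]
  by (simp add: crossing_time_def divide_right_mono)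

lemma crossing_time_last: "crossing_time (n - 1) = (1 - (1 - p) ^ n) / (p * (1 - p) ^ n)"
proof -
  have "(\<Sum>i\<le>n. binom_weight i) = binom_cdf (n - 1) + binom_weight n"
    using n_pos unfolding binom_cdf_def by (metis Suc_diff_1 less_le_trans zero_less_one sum.atMost_Suc)
  then have "binom_cdf (n - 1) = 1 - (1 - p) ^ n"
    using sum_binom_weight by (simp add: binom_weight_def)
  moreover have "binom_weight (n - 1) * up_rate (n - 1) = p * (1 - p) ^ n"
    using binom_weight_mult_up_rate[of "n - 1"] n_pos by simp
  ultimately show ?thesis by (simp add: crossing_time_def)
qed

lemma crossing_time_last_ge_1: "1 \<le> crossing_time (n - 1)"
proof -
  have "(1 - p) ^ n \<le> 1 - p"
    using power_decreasing[of 1 n "1 - p"] n_pos p_pos p_less_1 by simp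
  then have "(1 + p) * (1 - p) ^ n \<le> (1 + p) * (1 - p)"
    using p_pos by (intro mult_left_mono) auto
  also have "\<dots> \<le> 1"
    by (simp add: algebra_simps)
  finally have "(1 + p) * (1 - p) ^ n \<le> 1" .
  then show ?thesis
    unfolding crossing_time_last using p_pos p_less_1 by (simp add: field_simps)
qed

text \<open>The invariant \<open>crossing_time k * (up_rate k - down_rate k) \<le> 1\<close> propagates along
  the recursion because the drift \<open>up_rate - down_rate\<close> decreases in \<open>k\<close>.\<close>

lemma crossing_time_Suc_ge:
  "Suc k < n \<Longrightarrow>
     crossing_time k * (up_rate k - down_rate k) \<le> 1 \<and> crossing_time k \<le> crossing_time (Suc k)"
proof (induction k)
  case 0
  have h0: "crossing_time 0 * (up_rate 0 - down_rate 0) = 1"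
    using crossing_time_rec[of 0] 0 by (simp add: down_rate_def mult.commute)
  then have "crossing_time 0 * (up_rate 1 - down_rate 1) \<le> 1"
    using up_rate_minus_down_rate_Suc_le[of 0] crossing_time_nonneg[of 0] 0
    by (metis One_nat_def mult_left_mono order.trans Suc_lessD)
  then have "up_rate 1 * crossing_time 0 \<le> up_rate 1 * crossing_time 1"
    using crossing_time_rec[of 1] 0 by (simp add: algebra_simps)
  then show ?case using h0 up_rate_pos[of 1] 0 by simp
next
  case (Suc k)
  then have IH: "crossing_time k \<le> crossing_time (Suc k)" by auto
  have "down_rate (Suc k) * crossing_time k \<le> down_rate (Suc k) * crossing_time (Suc k)"
    by (rule mult_left_mono[OF IH down_rate_nonneg])
  moreover have "crossing_time (Suc k) * (up_rate (Suc k) - down_rate (Suc k))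
      = up_rate (Suc k) * crossing_time (Suc k) - down_rate (Suc k) * crossing_time (Suc k)"
    by (simp add: algebra_simps)
  ultimately have step: "crossing_time (Suc k) * (up_rate (Suc k) - down_rate (Suc k)) \<le> 1"
    using crossing_time_rec[of "Suc k"] Suc.prems by simp
  then have "crossing_time (Suc k) * (up_rate (Suc (Suc k)) - down_rate (Suc (Suc k))) \<le> 1"
    using up_rate_minus_down_rate_Suc_le[of "Suc k"] crossing_time_nonneg[of "Suc k"] Suc.prems
    by (metis mult_left_mono order.trans Suc_lessD)
  then have "up_rate (Suc (Suc k)) * crossing_time (Suc k) \<le> up_rate (Suc (Suc k)) * crossing_time (Suc (Suc k))"
    using crossing_time_rec[of "Suc (Suc k)"] Suc.prems by (simp add: algebra_simps)
  then show ?case using step up_rate_pos[of "Suc (Suc k)"] Suc.prems by simp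
qed

lemma crossing_time_mono: "j \<le> j' \<Longrightarrow> j' < n \<Longrightarrow> crossing_time j \<le> crossing_time j'"
  by (induction j' rule: dec_induct) (auto dest: crossing_time_Suc_ge intro: order_trans)

lemma expected_time_ge_n: "n \<le> k \<Longrightarrow> expected_time k = 0"
  by (simp add: expected_time_def)

lemma expected_time_Suc: "k < n \<Longrightarrow> expected_time (Suc k) = expected_time k - crossing_time k"
  by (simp add: expected_time_def sum.atLeast_Suc_lessThan)

lemma expected_time_eq: "expected_time k = alive k + Q expected_time k"
proof (cases "k < n")
  case True
  have "expected_time (k - 1) = expected_time k + (if k = 0 then 0 else crossing_time (k - 1))"
    using True expected_time_Suc[of "k - 1"] by (cases k) auto
  then have "Q expected_time k = expected_time k - up_rate k * crossing_time k + down_rate k * crossing_time (k - 1)"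
    using True by (simp add: Q_def expected_time_Suc down_rate_def algebra_simps)
  then show ?thesis using True crossing_time_rec[of k] by (simp add: alive_def)
qed (simp add: expected_time_ge_n alive_def Q_def)

lemma expected_time_nonneg: "0 \<le> expected_time k"
  unfolding expected_time_def using crossing_time_nonneg by (intro sum_nonneg) auto

lemma expected_time_le_0: "expected_time k \<le> expected_time 0"
  unfolding expected_time_def using crossing_time_nonneg by (intro sum_mono2) auto

lemma crossing_time_last_le_expected_time: "k < n \<Longrightarrow> crossing_time (n - 1) \<le> expected_time k"
  unfolding expected_time_def using crossing_time_nonneg by (intro member_le_sum) auto

lemma expected_time_0_ge_1: "1 \<le> expected_time 0"
  using crossing_time_last_ge_1 crossing_time_last_le_expected_time[of 0] n_pos by simp

lemma rate_mul_crossing_time_le: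
  assumes "j < n"
  shows "p * (1 - p) ^ n * crossing_time j \<le> ((1 - p) / p) ^ (n - 1 - j) / real (n - 1 choose j)"
proof -
  obtain i where i: "n = Suc j + i"
    using assms less_iff_Suc_add[of j n] by auto
  have cancel: "p * (1 - p) ^ n * (1 / (c * (1 - p) ^ Suc j * p ^ (n - j))) = ((1 - p) / p) ^ (n - 1 - j) / c"
    if "0 < c" for c :: real
    using that i p_pos p_less_1 by (simp add: power_add power_divide field_simps)
  have "p * (1 - p) ^ n * crossing_time j \<le> p * (1 - p) ^ n * (1 / (binom_weight j * up_rate j))"
    using crossing_time_le[OF assms] p_pos p_less_1 by (intro mult_left_mono) auto
  also have "\<dots> = ((1 - p) / p) ^ (n - 1 - j) / real (n - 1 choose j)"
    unfolding binom_weight_mult_up_rate[OF assms] using assms by (intro cancel) simp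
  finally show ?thesis .
qed

text \<open>Since \<open>crossing_time\<close> is increasing, all but the last two crossings cost at most
  \<open>n\<close> times the third-to-last one, which is \<open>O(1 / (n\<^sup>2 p q\<^sup>n))\<close>.\<close>

lemma rate_mul_expected_time_0_le:
  assumes "3 \<le> n"
  shows "p * (1 - p) ^ n * expected_time 0
           \<le> 1 - (1 - p) ^ n + ((1 - p) / p + 2 * ((1 - p) / p) ^ 2) / (real n - 1)"
proof -
  have field_cancel: "a * (x / (b * a / 2)) = 2 * x / b" if "0 < a" "0 < b" for a b x :: real
    using that by (simp add: field_simps)
  obtain m where m: "n = m + 3"
    using assms by (metis add.commute le_Suc_ex)
  let ?e = "p * (1 - p) ^ n" and ?r = "(1 - p) / p"
  have e_pos: "0 < ?e"
    using p_pos p_less_1 by simp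
  have indices: "{..<n} = {..<m + 3}" "n - 1 - m = 2" "n - 1 - (m + 1) = 1" "n - 1 = m + 2"
    "real n - 1 = real (m + 2)"
    using m by auto
  have "m < n" "m + 1 < n"
    using m by auto
  have "expected_time 0 = (\<Sum>j<m + 1. crossing_time j) + crossing_time (m + 1) + crossing_time (m + 2)"
    unfolding expected_time_def atLeast0LessThan indices by (simp add: numeral_3_eq_3)
  also have "(\<Sum>j<m + 1. crossing_time j) \<le> (\<Sum>j<m + 1. crossing_time m)"
    using m by (intro sum_mono crossing_time_mono) auto
  finally have "?e * expected_time 0
      \<le> ?e * (real (m + 1) * crossing_time m + crossing_time (m + 1) + crossing_time (m + 2))"
    using e_pos by (intro mult_left_mono) auto
  then have "?e * expected_time 0
      \<le> real (m + 1) * (?e * crossing_time m) + ?e * crossing_time (m + 1) + ?e * crossing_time (m + 2)"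
    by (simp add: algebra_simps)
  moreover have "real (m + 1) * (?e * crossing_time m) \<le> 2 * ?r ^ 2 / (real n - 1)"
  proof -
    have "m + 2 choose m = m + 2 choose 2"
      using binomial_symmetric[of m "m + 2"] by simp
    moreover have "2 * (m + 2 choose 2) = (m + 2) * (m + 1)"
      using binomial_absorption[of 1 "m + 2"] by (simp only: numeral_2_eq_2 One_nat_def) simp
    ultimately have "real (2 * (m + 2 choose m)) = real ((m + 2) * (m + 1))"
      by simp
    then have choose: "real (m + 2 choose m) = real (m + 2) * real (m + 1) / 2"
      by (simp only: of_nat_mult)
    have "?e * crossing_time m \<le> ?r ^ 2 / real (m + 2 choose m)"
      using rate_mul_crossing_time_le[of m] \<open>m < n\<close> unfolding indices by simp
    then have "real (m + 1) * (?e * crossing_time m) \<le> real (m + 1) * (?r ^ 2 / real (m + 2 choose m))"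
      by (rule mult_left_mono) simp
    also have "\<dots> = 2 * ?r ^ 2 / real (m + 2)"
      unfolding choose using field_cancel[of "real (m + 1)" "real (m + 2)" "?r ^ 2"] by simp
    also have "\<dots> = 2 * ?r ^ 2 / (real n - 1)"
      by (simp only: indices(5))
    finally show ?thesis .
  qed
  moreover have "?e * crossing_time (m + 1) \<le> ?r / (real n - 1)"
    using rate_mul_crossing_time_le[of "m + 1"] \<open>m + 1 < n\<close> unfolding indices by simp
  moreover have "?e * crossing_time (m + 2) = 1 - (1 - p) ^ n"
    using crossing_time_last e_pos p_less_1 unfolding indices by simp
  ultimately show ?thesis
    unfolding add_divide_distrib by linarith
qed

section \<open>Binomial moments of the completion time\<close>

text \<open>\<open>binom_moment r k\<close> is \<open>E\<^sub>k (T choose (r + 1))\<close>: summation by parts against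
  \<open>surv\<close>, see \<open>cc_prob_mult_choose_Suc_sums\<close>.\<close>

definition binom_moment_partial :: "nat \<Rightarrow> nat \<Rightarrow> nat \<Rightarrow> real" where
  "binom_moment_partial r N k = (\<Sum>t<N. real (t choose r) * surv t k)"

definition binom_moment :: "nat \<Rightarrow> nat \<Rightarrow> real" where
  "binom_moment r k = (\<Sum>t. real (t choose r) * surv t k)"

lemma binom_moment_partial_0_Suc:
  "binom_moment_partial 0 (Suc N) k = alive k + Q (binom_moment_partial 0 N) k"
  unfolding binom_moment_partial_def sum.lessThan_Suc_shift
  by (simp add: surv_0 surv_Suc Q_sum)

lemma binom_moment_partial_Suc_Suc:
  "binom_moment_partial (Suc r) (Suc N) k
     = Q (binom_moment_partial (Suc r) N) k + Q (binom_moment_partial r N) k"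
  unfolding binom_moment_partial_def sum.lessThan_Suc_shift
  by (simp add: surv_Suc Q_sum Q_scale algebra_simps sum.distrib)

lemma Q_expected_time_le: "Q expected_time k \<le> (expected_time 0 - 1) * alive k"
proof (cases "k < n")
  case True
  then show ?thesis using expected_time_eq[of k] expected_time_le_0[of k] by (simp add: alive_def)
qed (simp add: alive_def Q_def)

lemma Q_expected_time_ge: "(crossing_time (n - 1) - 1) * alive k \<le> Q expected_time k"
proof (cases "k < n")
  case True
  then show ?thesis
    using expected_time_eq[of k] crossing_time_last_le_expected_time[of k] by (simp add: alive_def)
qed (simp add: alive_def Q_def)

lemma binom_moment_partial_le:
  "binom_moment_partial r N k \<le> (expected_time 0 - 1) ^ r * expected_time k"
proof (induction N arbitrary: r k)
  case 0
  then show ?case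
    using expected_time_0_ge_1 expected_time_nonneg[of k] by (simp add: binom_moment_partial_def)
next
  case (Suc N)
  let ?M = "expected_time 0 - 1"
  show ?case
  proof (cases r)
    case 0
    have "Q (binom_moment_partial 0 N) k \<le> Q expected_time k"
      using Suc.IH[of 0] by (intro Q_mono) simp
    then show ?thesis
      using 0 binom_moment_partial_0_Suc[of N k] expected_time_eq[of k] by simp
  next
    case (Suc r')
    have M_nonneg: "0 \<le> ?M ^ r'"
      using expected_time_0_ge_1 by simp
    have "Q (binom_moment_partial (Suc r') N) k \<le> ?M * ?M ^ r' * Q expected_time k"
      using Suc.IH[of "Suc r'"]
        Q_mono[of "binom_moment_partial (Suc r') N" "\<lambda>k. ?M * ?M ^ r' * expected_time k" k]
      by (simp add: Q_scale mult.assoc)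
    moreover have "Q (binom_moment_partial r' N) k \<le> ?M ^ r' * Q expected_time k"
      using Suc.IH[of r'] Q_mono[of "binom_moment_partial r' N" "\<lambda>k. ?M ^ r' * expected_time k" k]
      by (simp add: Q_scale)
    moreover have "?M ^ r' * Q expected_time k \<le> ?M ^ r' * (?M * alive k)"
      using Q_expected_time_le[of k] M_nonneg by (rule mult_left_mono)
    ultimately have "binom_moment_partial (Suc r') (Suc N) k \<le> ?M * ?M ^ r' * (alive k + Q expected_time k)"
      using binom_moment_partial_Suc_Suc[of r' N k] by (simp add: algebra_simps)
    then show ?thesis
      using Suc expected_time_eq[of k] by (simp add: mult.commute)
  qed
qed

lemma summable_binom_moment: "summable (\<lambda>t. real (t choose r) * surv t k)"
  by (rule summableI_nonneg_bounded[where x="(expected_time 0 - 1) ^ r * expected_time k"])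
     (use binom_moment_partial_le surv_nonneg in \<open>auto simp: binom_moment_partial_def\<close>)

lemma binom_moment_le: "binom_moment r k \<le> (expected_time 0 - 1) ^ r * expected_time k"
  unfolding binom_moment_def
  by (rule suminf_le_const[OF summable_binom_moment])
     (use binom_moment_partial_le in \<open>auto simp: binom_moment_partial_def\<close>)

lemma binom_moment_nonneg: "0 \<le> binom_moment r k"
  unfolding binom_moment_def by (intro suminf_nonneg summable_binom_moment) (simp add: surv_nonneg)

lemma binom_moment_ge_n: "n \<le> k \<Longrightarrow> binom_moment r k = 0"
  by (simp add: binom_moment_def surv_ge_n)

lemma surv_tendsto_0: "(\<lambda>t. surv t k) \<longlonglongrightarrow> 0"
  using summable_LIMSEQ_zero[OF summable_binom_moment[of 0 k]] by simp

lemma Q_binom_moment_shift: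
  "Q (binom_moment r) k = (\<Sum>t. real (t choose r) * surv (Suc t) k)"
  unfolding binom_moment_def
  by (subst Q_suminf[OF summable_binom_moment]) (simp add: surv_Suc Q_scale)

lemma binom_moment_0_eq: "binom_moment 0 k = alive k + Q (binom_moment 0) k"
  unfolding Q_binom_moment_shift binom_moment_def
  using suminf_split_head[OF summable_binom_moment[of 0 k]] by (simp add: surv_0)

lemma binom_moment_Suc_eq: "binom_moment (Suc r) k = Q (binom_moment (Suc r)) k + Q (binom_moment r) k"
proof -
  have shifted: "summable (\<lambda>t. real (t choose r') * surv (Suc t) k)" for r'
    by (rule summable_comparison_test[OF _ summable_binom_moment[of r' k]])
       (auto intro!: exI[of _ 0] mult_left_mono surv_Suc_le simp: surv_nonneg)
  have "binom_moment (Suc r) k = (\<Sum>t. real (Suc t choose Suc r) * surv (Suc t) k)"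
    using suminf_split_head[OF summable_binom_moment[of "Suc r" k]] by (simp add: binom_moment_def)
  also have "\<dots> = (\<Sum>t. real (t choose Suc r) * surv (Suc t) k + real (t choose r) * surv (Suc t) k)"
    by (simp add: algebra_simps)
  also have "\<dots> = Q (binom_moment (Suc r)) k + Q (binom_moment r) k"
    unfolding Q_binom_moment_shift using suminf_add[OF shifted shifted] by simp
  finally show ?thesis .
qed

text \<open>A minimum principle: the killed chain dies almost surely, so a superharmonic
  function bounded below on the transient states is nonnegative.\<close>

lemma nonneg_if_superharmonic:
  assumes super: "\<And>k. Q D k \<le> D k" and bounded: "\<And>k. - K * alive k \<le> D k"
  shows "0 \<le> D k"
proof -
  have iter: "(Q ^^ N) D k \<le> D k" for N k
  proof (induction N arbitrary: k)
    case (Suc N)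
    have "(Q ^^ Suc N) D k \<le> Q D k" by (auto intro: Q_mono Suc.IH)
    then show ?case using super[of k] by (rule order_trans)
  qed simp
  have "- K * surv N k \<le> D k" for N
  proof -
    have "(Q ^^ N) (\<lambda>k. - K * alive k) k \<le> (Q ^^ N) D k"
      by (intro Q_pow_mono bounded)
    moreover have "(Q ^^ N) (\<lambda>k. - K * alive k) k = - K * surv N k"
      using Q_pow_scale[of N "- K" alive] by (simp add: surv_def)
    ultimately show ?thesis
      using iter[of N k] by simp
  qed
  moreover have "(\<lambda>N. - K * surv N k) \<longlonglongrightarrow> - K * 0"
    by (intro tendsto_mult tendsto_const surv_tendsto_0)
  ultimately show ?thesis
    by (intro LIMSEQ_le_const2[where X="\<lambda>N. - K * surv N k"]) auto
qed

lemma binom_moment_ge: "(crossing_time (n - 1) - 1) ^ r * expected_time k \<le> binom_moment r k"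
proof (induction r arbitrary: k)
  case 0
  have "0 \<le> binom_moment 0 k - expected_time k"
  proof (rule nonneg_if_superharmonic[where K = "expected_time 0"])
    fix k
    show "Q (\<lambda>k. binom_moment 0 k - expected_time k) k \<le> binom_moment 0 k - expected_time k"
      using binom_moment_0_eq[of k] expected_time_eq[of k] by (simp add: Q_diff)
    show "- expected_time 0 * alive k \<le> binom_moment 0 k - expected_time k"
      using binom_moment_nonneg[of 0 k] expected_time_le_0[of k]
      by (cases "k < n") (auto simp: alive_def binom_moment_ge_n expected_time_ge_n)
  qed
  then show ?case by simp
next
  case (Suc r)
  let ?L = "crossing_time (n - 1) - 1"
  let ?D = "\<lambda>k. binom_moment (Suc r) k - ?L ^ Suc r * expected_time k"
  have L_nonneg: "0 \<le> ?L"
    using crossing_time_last_ge_1 by simp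
  have "0 \<le> ?D k"
  proof (rule nonneg_if_superharmonic[where K = "?L ^ Suc r * expected_time 0"])
    fix k
    have "?L ^ r * Q expected_time k \<le> Q (binom_moment r) k"
      using Q_mono[of "\<lambda>k. ?L ^ r * expected_time k" "binom_moment r" k] Suc.IH by (simp add: Q_scale)
    moreover have "?L ^ r * (?L * alive k) \<le> ?L ^ r * Q expected_time k"
      using Q_expected_time_ge[of k] L_nonneg by (intro mult_left_mono) auto
    moreover have "Q ?D k = Q (binom_moment (Suc r)) k - ?L ^ Suc r * Q expected_time k"
      by (simp only: Q_diff Q_scale)
    moreover have "?L ^ Suc r * alive k = ?L ^ r * (?L * alive k)"
      by simp
    ultimately show "Q ?D k \<le> ?D k"
      using binom_moment_Suc_eq[of r k] expected_time_eq[of k] by (simp add: algebra_simps)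
    show "- (?L ^ Suc r * expected_time 0) * alive k \<le> ?D k"
    proof (cases "k < n")
      case True
      have "?L ^ Suc r * expected_time k \<le> ?L ^ Suc r * expected_time 0"
        using expected_time_le_0[of k] L_nonneg by (intro mult_left_mono) auto
      then show ?thesis
        using True binom_moment_nonneg[of "Suc r" k] by (simp add: alive_def)
    qed (simp add: alive_def binom_moment_ge_n expected_time_ge_n)
  qed
  then show ?case by simp
qed

section \<open>The law of the completion time\<close>

lemma cc_prob_0: "cc_prob n p 0 = 0"
  using n_pos by (simp add: cc_prob_def cc_cdf_eq surv_0 alive_def)

lemma cc_prob_Suc: "cc_prob n p (Suc t) = surv t 0 - surv (Suc t) 0"
  by (simp add: cc_prob_def cc_cdf_eq)

lemma cc_prob_nonneg: "0 \<le> cc_prob n p t"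
  by (cases t) (auto simp: cc_prob_0 cc_prob_Suc intro: surv_Suc_le)

lemma sum_cc_prob: "(\<Sum>t<Suc N. cc_prob n p t) = 1 - surv N 0"
  using n_pos by (induction N) (simp_all add: cc_prob_0 cc_prob_Suc surv_0 alive_def)

lemma cc_prob_sums: "cc_prob n p sums 1"
proof -
  have "(\<lambda>N. 1 - surv N 0) \<longlonglongrightarrow> 1"
    using tendsto_diff[OF tendsto_const surv_tendsto_0, of 1 0] by simp
  then show ?thesis
    unfolding sums_def by (intro LIMSEQ_imp_Suc[of "\<lambda>N. \<Sum>t<N. cc_prob n p t"]) (simp only: sum_cc_prob)
qed

lemma sum_cc_prob_mult_choose:
  "(\<Sum>t<Suc N. cc_prob n p t * real (t choose Suc r))
     = (\<Sum>t<N. real (t choose r) * surv t 0) - real (N choose Suc r) * surv N 0"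
proof (induction N)
  case (Suc N)
  then show ?case by (simp add: cc_prob_Suc algebra_simps)
qed (simp add: cc_prob_0)

lemma cc_prob_mult_choose_Suc_sums:
  "(\<lambda>t. cc_prob n p t * real (t choose Suc r)) sums binom_moment r 0"
proof -
  have "(\<lambda>N. \<Sum>t<N. real (t choose r) * surv t 0) \<longlonglongrightarrow> binom_moment r 0"
    using summable_sums[OF summable_binom_moment[of r 0]] unfolding sums_def binom_moment_def .
  moreover have "(\<lambda>N. real (N choose Suc r) * surv N 0) \<longlonglongrightarrow> 0"
    using summable_LIMSEQ_zero[OF summable_binom_moment[of "Suc r" 0]] .
  ultimately have "(\<lambda>N. \<Sum>t<Suc N. cc_prob n p t * real (t choose Suc r)) \<longlonglongrightarrow> binom_moment r 0"
    unfolding sum_cc_prob_mult_choose using tendsto_diff by fastforce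
  then show ?thesis
    unfolding sums_def by (rule LIMSEQ_imp_Suc)
qed

text \<open>\<open>choose_moment j\<close> is \<open>E (T choose j)\<close> for the chain started empty.\<close>

definition choose_moment :: "nat \<Rightarrow> real" where
  "choose_moment j = (if j = 0 then 1 else binom_moment (j - 1) 0)"

lemma cc_prob_mult_choose_sums: "(\<lambda>t. cc_prob n p t * real (t choose j)) sums choose_moment j"
  by (cases j) (simp_all add: choose_moment_def cc_prob_sums cc_prob_mult_choose_Suc_sums)

lemma cc_prob_mult_power_sums:
  "(\<lambda>t. cc_prob n p t * real t ^ r) sums (\<Sum>j\<le>r. real (Stirling r j) * fact j * choose_moment j)"
proof -
  have "(\<lambda>t. \<Sum>j\<le>r. real (Stirling r j) * fact j * (cc_prob n p t * real (t choose j)))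
          sums (\<Sum>j\<le>r. real (Stirling r j) * fact j * choose_moment j)"
    by (intro sums_sum sums_mult cc_prob_mult_choose_sums)
  then show ?thesis
    by (simp add: real_power_eq_sum_Stirling_choose sum_distrib_left algebra_simps)
qed

lemma integral_T_law_power:
  "integral\<^sup>L (T_law n p) (\<lambda>t. real t ^ r) = (\<Sum>j\<le>r. real (Stirling r j) * fact j * choose_moment j)"
  unfolding T_law_def
  by (rule integral_density_nat_sums[OF cc_prob_nonneg _ cc_prob_mult_power_sums]) simp

lemma integral_T_law_Y_power:
  "integral\<^sup>L (T_law n p) (\<lambda>t. Y_scale n p t ^ r)
     = (p * (1 - p) ^ n) ^ r * integral\<^sup>L (T_law n p) (\<lambda>t. real t ^ r)"
  unfolding integral_T_law_power unfolding T_law_def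
proof (rule integral_density_nat_sums[OF cc_prob_nonneg])
  show "0 \<le> Y_scale n p t ^ r" for t
    using p_pos p_less_1 by (simp add: Y_scale_def)
  show "(\<lambda>t. cc_prob n p t * Y_scale n p t ^ r)
          sums ((p * (1 - p) ^ n) ^ r * (\<Sum>j\<le>r. real (Stirling r j) * fact j * choose_moment j))"
    using sums_mult[OF cc_prob_mult_power_sums, of "(p * (1 - p) ^ n) ^ r" r]
    by (simp add: Y_scale_def power_mult_distrib algebra_simps)
qed

lemma cc_prob_tail_sums: "(\<lambda>t. cc_prob n p t * indicator {K<..} t) sums surv K 0"
proof -
  have "(\<lambda>t. cc_prob n p (t + Suc K)) sums surv K 0"
    using sums_split_initial_segment[OF cc_prob_sums, of "Suc K"] unfolding sum_cc_prob by simp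
  then show ?thesis
    by (subst sums_zero_iff_shift[symmetric, where n="Suc K"]) auto
qed

lemma measure_T_law_Y_gt_le:
  assumes "0 \<le> x"
  shows "measure (T_law n p) {t. Y_scale n p t > x} \<le> surv (nat \<lfloor>x / (p * (1 - p) ^ n)\<rfloor>) 0"
proof -
  let ?e = "p * (1 - p) ^ n"
  let ?t0 = "nat \<lfloor>x / ?e\<rfloor>"
  have "t \<in> {?t0<..}" if "Y_scale n p t > x" for t
  proof -
    have "x / ?e < real t"
      using that p_pos p_less_1 by (simp add: Y_scale_def field_simps)
    moreover have "0 \<le> x / ?e"
      using assms p_pos p_less_1 by simp
    ultimately show ?thesis
      by (simp add: nat_less_iff floor_less_iff)
  qed
  then have "cc_prob n p t * indicator {t. Y_scale n p t > x} t \<le> cc_prob n p t * indicator {?t0<..} t" for t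
    using cc_prob_nonneg[of t] by (auto simp: indicator_def)
  then show ?thesis
    unfolding T_law_def
    by (rule sums_le[OF _ measure_density_nat_sums[OF cc_prob_nonneg sums_summable[OF cc_prob_sums]]
                       cc_prob_tail_sums])
qed

lemma surv_add_le: "(\<And>k. surv s k \<le> c * alive k) \<Longrightarrow> surv (t + s) k \<le> c * surv t k"
  unfolding surv_add using Q_pow_mono[of "surv s" "\<lambda>k. c * alive k" t k]
  by (simp add: Q_pow_scale surv_def)

lemma surv_markov: "real (Suc s) * surv s k \<le> expected_time 0"
proof -
  have "real (Suc s) * surv s k \<le> (\<Sum>t<Suc s. surv t k)"
    using sum_mono[of "{..<Suc s}" "\<lambda>_. surv s k" "\<lambda>t. surv t k"] surv_antimono by simp
  also have "\<dots> = (\<Sum>t<Suc s. real (t choose 0) * surv t k)"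
    by simp
  also have "\<dots> \<le> binom_moment 0 k"
    unfolding binom_moment_def by (rule sum_le_suminf[OF summable_binom_moment]) (auto simp: surv_nonneg)
  also have "\<dots> \<le> expected_time 0"
    using binom_moment_le[of 0 k] expected_time_le_0[of k] by simp
  finally show ?thesis .
qed

text \<open>By Markov's inequality, \<open>halving_time\<close> steps halve the survival probability
  from any state.\<close>

definition halving_time :: nat where
  "halving_time = nat \<lceil>2 * expected_time 0\<rceil>"

lemma halving_time_bounds:
  "2 * expected_time 0 \<le> real halving_time" "real halving_time \<le> 2 * expected_time 0 + 1"
  "1 \<le> halving_time"
  using expected_time_0_ge_1 unfolding halving_time_def by linarith+

lemma surv_halving_time: "surv halving_time k \<le> 1/2 * alive k"
proof (cases "k < n")
  case True
  have "2 * expected_time 0 * surv halving_time k \<le> real (Suc halving_time) * surv halving_time k"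
    using halving_time_bounds(1) surv_nonneg by (intro mult_right_mono) auto
  also have "\<dots> \<le> expected_time 0"
    by (rule surv_markov)
  finally have "2 * expected_time 0 * surv halving_time k \<le> expected_time 0" .
  then show ?thesis
    using True expected_time_0_ge_1 by (simp add: alive_def)
qed (simp add: surv_ge_n alive_def)

lemma surv_le_half_power: "surv t 0 \<le> (1/2) ^ (t div halving_time)"
proof -
  have "surv (m * halving_time) k \<le> (1/2) ^ m" for m k
  proof (induction m arbitrary: k)
    case 0
    then show ?case using surv_le_alive[of 0 k] by (simp add: alive_def split: if_splits)
  next
    case (Suc m)
    have "surv (Suc m * halving_time) k = surv (m * halving_time + halving_time) k"
      by (simp add: add.commute)
    also have "\<dots> \<le> 1/2 * surv (m * halving_time) k"
      by (rule surv_add_le[OF surv_halving_time])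
    finally show ?case using Suc.IH[of k] by simp
  qed
  moreover have "surv t 0 \<le> surv (t div halving_time * halving_time) 0"
    by (rule surv_antimono) simp
  ultimately show ?thesis
    by (meson order_trans)
qed

lemma T_law_Y_tail_le:
  assumes mean: "p * (1 - p) ^ n * expected_time 0 \<le> 2" and "0 \<le> x"
  shows "measure (T_law n p) {t. Y_scale n p t > x} \<le> 3 * exp (- (1/10) * x)"
proof -
  let ?e = "p * (1 - p) ^ n"
  define t0 where "t0 = nat \<lfloor>x / ?e\<rfloor>"
  define m where "m = t0 div halving_time"
  have e_pos: "0 < ?e"
    using p_pos p_less_1 by simp
  have "(1 - p) ^ n \<le> 1"
    using p_pos p_less_1 by (intro power_le_one) auto
  then have e_le_1: "?e \<le> 1"
    using p_pos p_less_1 by (intro mult_le_one) auto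
  have "t0 mod halving_time < halving_time"
    using halving_time_bounds(3) by simp
  moreover have "t0 = m * halving_time + t0 mod halving_time"
    unfolding m_def by (rule div_mult_mod_eq[symmetric])
  ultimately have "t0 + 1 \<le> m * halving_time + halving_time"
    by linarith
  then have "real (t0 + 1) \<le> real ((m + 1) * halving_time)"
    by (simp only: of_nat_le_iff) simp
  then have "real t0 + 1 \<le> (real m + 1) * real halving_time"
    by (simp add: algebra_simps)
  have "?e * real halving_time \<le> 5"
    using mult_left_mono[OF halving_time_bounds(2), of ?e] e_pos mean e_le_1 by (simp add: algebra_simps)
  have "x / ?e < real t0 + 1"
    using \<open>0 \<le> x\<close> e_pos unfolding t0_def by linarith
  also have "\<dots> \<le> (real m + 1) * real halving_time"
    by fact
  finally have "x < (real m + 1) * (?e * real halving_time)"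
    using e_pos by (simp add: field_simps)
  also have "\<dots> \<le> (real m + 1) * 5"
    using \<open>?e * real halving_time \<le> 5\<close> by (intro mult_left_mono) auto
  finally have exponent: "- real m / 2 \<le> 1/2 + - (1/10) * x"
    by simp
  have "measure (T_law n p) {t. Y_scale n p t > x} \<le> surv t0 0"
    unfolding t0_def using measure_T_law_Y_gt_le[OF \<open>0 \<le> x\<close>] .
  also have "\<dots> \<le> exp (- real m / 2)"
    unfolding m_def using surv_le_half_power half_power_le_exp by (rule order_trans)
  also have "\<dots> \<le> exp (1/2) * exp (- (1/10) * x)"
    using exponent by (simp flip: exp_add)
  also have "\<dots> \<le> 3 * exp (- (1/10) * x)"
  proof -
    have "exp (1/2 :: real) \<le> 3"
      by (rule order_trans[OF _ exp_le]) simp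
    then show ?thesis
      by (intro mult_right_mono) auto
  qed
  finally show ?thesis .
qed

lemma choose_moment_Suc_ge: "(crossing_time (n - 1) - 1) ^ r * crossing_time (n - 1) \<le> choose_moment (Suc r)"
proof -
  have "(crossing_time (n - 1) - 1) ^ r * crossing_time (n - 1) \<le> (crossing_time (n - 1) - 1) ^ r * expected_time 0"
    using crossing_time_last_le_expected_time[of 0] n_pos crossing_time_last_ge_1 by (intro mult_left_mono) auto
  also have "\<dots> \<le> choose_moment (Suc r)"
    using binom_moment_ge by (simp add: choose_moment_def)
  finally show ?thesis .
qed

lemma choose_moment_Suc_le: "choose_moment (Suc r) \<le> (expected_time 0 - 1) ^ r * expected_time 0"
  using binom_moment_le[of r 0] by (simp add: choose_moment_def)

lemma rate_mul_crossing_time_last: "p * (1 - p) ^ n * crossing_time (n - 1) = 1 - (1 - p) ^ n"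
  unfolding crossing_time_last using p_pos p_less_1 by simp

end

section \<open>Asymptotics as the number of types grows\<close>

lemma clumsy_collectorI: "1 \<le> n \<Longrightarrow> 0 < p \<Longrightarrow> p < 1 \<Longrightarrow> clumsy_collector n p"
  by (simp add: clumsy_collector_def)

context
  fixes p :: real
  assumes p_pos: "0 < p" and p_less_1: "p < 1"
begin

lemma eventually_clumsy_collector: "\<forall>\<^sub>F n in sequentially. clumsy_collector n p"
  using eventually_ge_at_top[of 1] by eventually_elim (simp add: clumsy_collectorI p_pos p_less_1)

lemma power_1_minus_p_tendsto_0: "(\<lambda>n. (1 - p) ^ n) \<longlonglongrightarrow> 0"
  using p_pos p_less_1 by (intro LIMSEQ_power_zero) simp

lemma rate_tendsto_0: "(\<lambda>n. p * (1 - p) ^ n) \<longlonglongrightarrow> 0"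
  using tendsto_mult[OF tendsto_const power_1_minus_p_tendsto_0, of p] by simp

lemma rate_mul_crossing_time_last_tendsto_1:
  "(\<lambda>n. p * (1 - p) ^ n * clumsy_collector.crossing_time n p (n - 1)) \<longlonglongrightarrow> 1"
proof -
  have "(\<lambda>n. 1 - (1 - p) ^ n) \<longlonglongrightarrow> 1"
    using tendsto_diff[OF tendsto_const power_1_minus_p_tendsto_0, of 1] by simp
  moreover have "\<forall>\<^sub>F n in sequentially.
      1 - (1 - p) ^ n = p * (1 - p) ^ n * clumsy_collector.crossing_time n p (n - 1)"
    using eventually_clumsy_collector
    by eventually_elim (rule clumsy_collector.rate_mul_crossing_time_last[symmetric])
  ultimately show ?thesis
    by (rule Lim_transform_eventually)
qed

lemma rate_mul_expected_time_tendsto_1: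
  "(\<lambda>n. p * (1 - p) ^ n * clumsy_collector.expected_time n p 0) \<longlonglongrightarrow> 1"
proof (rule tendsto_sandwich[OF _ _ rate_mul_crossing_time_last_tendsto_1])
  let ?c = "(1 - p) / p + 2 * ((1 - p) / p) ^ 2"
  show "\<forall>\<^sub>F n in sequentially. p * (1 - p) ^ n * clumsy_collector.crossing_time n p (n - 1)
                                \<le> p * (1 - p) ^ n * clumsy_collector.expected_time n p 0"
    using eventually_clumsy_collector
  proof eventually_elim
    case (elim n)
    then show ?case
      using clumsy_collector.crossing_time_last_le_expected_time[OF elim, of 0] clumsy_collector.n_pos[OF elim]
        p_pos p_less_1 by (intro mult_left_mono) auto
  qed
  show "\<forall>\<^sub>F n in sequentially. p * (1 - p) ^ n * clumsy_collector.expected_time n p 0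
                                \<le> 1 - (1 - p) ^ n + ?c / (real n - 1)"
    using eventually_ge_at_top[of 3]
    by eventually_elim (simp add: clumsy_collector.rate_mul_expected_time_0_le clumsy_collectorI p_pos p_less_1)
  have "(\<lambda>n. ?c / (real n - 1)) \<longlonglongrightarrow> 0"
    by real_asymp
  then show "(\<lambda>n. 1 - (1 - p) ^ n + ?c / (real n - 1)) \<longlonglongrightarrow> 1"
    using tendsto_add[OF tendsto_diff[OF tendsto_const power_1_minus_p_tendsto_0]] by fastforce
qed

lemma rate_power_mul_choose_moment_tendsto_1:
  "(\<lambda>n. (p * (1 - p) ^ n) ^ j * clumsy_collector.choose_moment n p j) \<longlonglongrightarrow> 1"
proof (cases j)
  case 0
  have "\<forall>\<^sub>F n in sequentially. 1 = (p * (1 - p) ^ n) ^ j * clumsy_collector.choose_moment n p j"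
    using eventually_clumsy_collector by eventually_elim (simp add: clumsy_collector.choose_moment_def 0)
  then show ?thesis
    by (rule Lim_transform_eventually[OF tendsto_const])
next
  case (Suc r)
  let ?e = "\<lambda>n. p * (1 - p) ^ n"
  let ?L = "\<lambda>n. ?e n * clumsy_collector.crossing_time n p (n - 1)"
  let ?M = "\<lambda>n. ?e n * clumsy_collector.expected_time n p 0"
  have scale: "e ^ Suc r * ((X - 1) ^ r * X) = (e * X - e) ^ r * (e * X)" for e X :: real
  proof -
    have "e * X - e = e * (X - 1)"
      by (simp add: algebra_simps)
    then show ?thesis
      by (simp add: power_mult_distrib mult_ac)
  qed
  show ?thesis
  proof (rule tendsto_sandwich)
    show "\<forall>\<^sub>F n in sequentially. (?L n - ?e n) ^ r * ?L n \<le> ?e n ^ j * clumsy_collector.choose_moment n p j"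
      using eventually_clumsy_collector
    proof eventually_elim
      case (elim n)
      then show ?case
        unfolding Suc scale[symmetric] using p_pos p_less_1
        by (intro mult_left_mono clumsy_collector.choose_moment_Suc_ge) auto
    qed
    show "\<forall>\<^sub>F n in sequentially. ?e n ^ j * clumsy_collector.choose_moment n p j \<le> (?M n - ?e n) ^ r * ?M n"
      using eventually_clumsy_collector
    proof eventually_elim
      case (elim n)
      then show ?case
        unfolding Suc scale[symmetric] using p_pos p_less_1
        by (intro mult_left_mono clumsy_collector.choose_moment_Suc_le) auto
    qed
    show "(\<lambda>n. (?L n - ?e n) ^ r * ?L n) \<longlonglongrightarrow> 1"
      using tendsto_mult[OF tendsto_power[OF tendsto_diff[OF rate_mul_crossing_time_last_tendsto_1 rate_tendsto_0]]
                            rate_mul_crossing_time_last_tendsto_1, of r] by simp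
    show "(\<lambda>n. (?M n - ?e n) ^ r * ?M n) \<longlonglongrightarrow> 1"
      using tendsto_mult[OF tendsto_power[OF tendsto_diff[OF rate_mul_expected_time_tendsto_1 rate_tendsto_0]]
                            rate_mul_expected_time_tendsto_1, of r] by simp
  qed
qed

lemma Y_moment_tendsto_fact: "(\<lambda>n. integral\<^sup>L (T_law n p) (\<lambda>t. Y_scale n p t ^ r)) \<longlonglongrightarrow> fact r"
proof -
  let ?e = "\<lambda>n. p * (1 - p) ^ n" and ?a = "\<lambda>j. real (Stirling r j) * fact j"
  let ?f = "\<lambda>n. \<Sum>j\<le>r. ?a j * (?e n ^ (r - j) * (?e n ^ j * clumsy_collector.choose_moment n p j))"
  have "?f \<longlonglongrightarrow> (\<Sum>j\<le>r. ?a j * (0 ^ (r - j) * 1))"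
    by (intro tendsto_sum tendsto_mult tendsto_const tendsto_power rate_tendsto_0
          rate_power_mul_choose_moment_tendsto_1)
  also have "(\<Sum>j\<le>r. ?a j * (0 ^ (r - j) * 1)) = (\<Sum>j\<le>r. if j = r then fact r else 0)"
    by (intro sum.cong) auto
  finally have "?f \<longlonglongrightarrow> fact r"
    by simp
  moreover have "\<forall>\<^sub>F n in sequentially. ?f n = integral\<^sup>L (T_law n p) (\<lambda>t. Y_scale n p t ^ r)"
    using eventually_clumsy_collector
  proof eventually_elim
    case (elim n)
    have power: "?e n ^ (r - j) * (?e n ^ j * c) = ?e n ^ r * c" if "j \<le> r" for j c
      using that by (simp add: mult.assoc[symmetric] flip: power_add)
    have "?f n = (\<Sum>j\<le>r. ?a j * (?e n ^ r * clumsy_collector.choose_moment n p j))"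
      by (intro sum.cong refl) (simp only: atMost_iff power)
    also have "\<dots> = ?e n ^ r * (\<Sum>j\<le>r. ?a j * clumsy_collector.choose_moment n p j)"
      by (simp add: sum_distrib_left mult.left_commute)
    finally show ?case
      by (simp add: clumsy_collector.integral_T_law_Y_power[OF elim] clumsy_collector.integral_T_law_power[OF elim])
  qed
  ultimately show ?thesis
    by (rule Lim_transform_eventually)
qed

lemma T_mean_asymp:
  "(\<lambda>n. integral\<^sup>L (T_law n p) (\<lambda>t. real t)) \<sim>[sequentially] (\<lambda>n. 1 / (p * (1 - p) ^ n))"
proof (rule asymp_equivI')
  have "\<forall>\<^sub>F n in sequentially. integral\<^sup>L (T_law n p) (\<lambda>t. Y_scale n p t ^ 1)
          = integral\<^sup>L (T_law n p) (\<lambda>t. real t) / (1 / (p * (1 - p) ^ n))"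
    using eventually_clumsy_collector
  proof eventually_elim
    case (elim n)
    show ?case
      using clumsy_collector.integral_T_law_Y_power[OF elim, of 1] p_pos p_less_1 by simp
  qed
  then show "((\<lambda>n. integral\<^sup>L (T_law n p) (\<lambda>t. real t) / (1 / (p * (1 - p) ^ n)))
               \<longlongrightarrow> 1) sequentially"
    using Y_moment_tendsto_fact[of 1] by (simp add: Lim_transform_eventually)
qed

lemma T_variance_asymp:
  "(\<lambda>n. integral\<^sup>L (T_law n p) (\<lambda>t. (real t)\<^sup>2) - (integral\<^sup>L (T_law n p) (\<lambda>t. real t))\<^sup>2)
     \<sim>[sequentially] (\<lambda>n. 1 / (p\<^sup>2 * (1 - p) ^ (2 * n)))"
proof (rule asymp_equivI')
  let ?EY = "\<lambda>n r. integral\<^sup>L (T_law n p) (\<lambda>t. Y_scale n p t ^ r)"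
  have "(\<lambda>n. ?EY n 2 - (?EY n 1)\<^sup>2) \<longlonglongrightarrow> fact 2 - (fact 1)\<^sup>2"
    by (intro tendsto_diff tendsto_power Y_moment_tendsto_fact)
  moreover have "\<forall>\<^sub>F n in sequentially. ?EY n 2 - (?EY n 1)\<^sup>2
     = (integral\<^sup>L (T_law n p) (\<lambda>t. (real t)\<^sup>2) - (integral\<^sup>L (T_law n p) (\<lambda>t. real t))\<^sup>2)
         / (1 / (p\<^sup>2 * (1 - p) ^ (2 * n)))"
    using eventually_clumsy_collector
  proof eventually_elim
    case (elim n)
    have "?EY n 2 = (p * (1 - p) ^ n) ^ 2 * integral\<^sup>L (T_law n p) (\<lambda>t. (real t)\<^sup>2)"
      by (rule clumsy_collector.integral_T_law_Y_power[OF elim])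
    moreover have "?EY n 1 = p * (1 - p) ^ n * integral\<^sup>L (T_law n p) (\<lambda>t. real t)"
      using clumsy_collector.integral_T_law_Y_power[OF elim, of 1] by simp
    moreover have "(1 - p) ^ (2 * n) = ((1 - p) ^ n)\<^sup>2"
      by (simp add: power_mult mult.commute)
    ultimately show ?case
      using p_pos p_less_1 by (simp add: power_mult_distrib algebra_simps)
  qed
  ultimately show "((\<lambda>n. (integral\<^sup>L (T_law n p) (\<lambda>t. (real t)\<^sup>2)
                          - (integral\<^sup>L (T_law n p) (\<lambda>t. real t))\<^sup>2)
                         / (1 / (p\<^sup>2 * (1 - p) ^ (2 * n)))) \<longlongrightarrow> 1) sequentially"
    by (simp add: Lim_transform_eventually)
qed

lemma T_law_Y_tail_exponential:
  "\<exists>C c. 0 < C \<and> 0 < c \<and> (\<forall>\<^sub>F n in sequentially. \<forall>x::real. x \<ge> 0 \<longrightarrow>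
      measure (T_law n p) {t. Y_scale n p t > x} \<le> C * exp (- c * x))"
proof -
  have "\<forall>\<^sub>F n in sequentially. \<forall>x::real. x \<ge> 0 \<longrightarrow>
      measure (T_law n p) {t. Y_scale n p t > x} \<le> 3 * exp (- (1/10) * x)"
    using eventually_clumsy_collector order_tendstoD(2)[OF rate_mul_expected_time_tendsto_1, of 2, simplified]
  proof eventually_elim
    case (elim n)
    then show ?case
      using clumsy_collector.T_law_Y_tail_le[OF elim(1) less_imp_le[OF elim(2)]] by blast
  qed
  then show ?thesis
    by (intro exI[of _ "3 :: real"] exI[of _ "1/10 :: real"] conjI) simp_all
qed

end

theorem mainTheorem4:
  fixes p :: real
  assumes "0 < p" and "p < 1"
  shows "(\<exists>C c. 0 < C \<and> 0 < c \<and>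
            (\<forall>\<^sub>F n in sequentially. \<forall>x::real. x \<ge> 0 \<longrightarrow>
               measure (T_law n p) {t. Y_scale n p t > x} \<le> C * exp (- c * x)))
       \<and> (\<forall>r::nat. r \<ge> 1 \<longrightarrow>
            (\<lambda>n. integral\<^sup>L (T_law n p) (\<lambda>t. (Y_scale n p t) ^ r)) \<longlonglongrightarrow> fact r)
       \<and> (\<lambda>n. integral\<^sup>L (T_law n p) (\<lambda>t. real t))
            \<sim>[sequentially] (\<lambda>n. 1 / (p * (1 - p) ^ n))
       \<and> (\<lambda>n. integral\<^sup>L (T_law n p) (\<lambda>t. (real t)\<^sup>2)
                - (integral\<^sup>L (T_law n p) (\<lambda>t. real t))\<^sup>2)
            \<sim>[sequentially] (\<lambda>n. 1 / (p\<^sup>2 * (1 - p) ^ (2 * n)))"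
  using T_law_Y_tail_exponential[OF assms] Y_moment_tendsto_fact[OF assms]
    T_mean_asymp[OF assms] T_variance_asymp[OF assms]
  by blast

end
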